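(* Let $\alpha$ be any graph function on a strongly connected directed graph $G$. Then any fair infinite sequence of raising operations applied starting from $\alpha$ produces graph functions converging to a raising-balanced graph function $\alpha^R$, and $\alpha^R$ is the same for all fair sequences of raising operations (independent of the order of operations). Symmetrically, any fair infinite sequence of lowering operations starting from $\alpha$ converges to a lowering-balanced graph function $\alpha^L$ that is independent of the order of operations.
   Context: $G$ is a strongly connected directed graph on vertex set $\{1,\dots,n\}$ (self-loops allowed). A graph function assigns a real weight $\alpha_{uv}$ to each edge $(u,v)$. Let $\alpha_v^{\text{in}}=\max_{u:(u,v)\in G}\alpha_{uv}$, $\alpha_v^{\text{out}}=\max_{w:(v,w)\in G}\alpha_{vw}$. For $x\in\mathbb R$ and $S$ a set of vertices, $\alpha+xS$ is the graph function $(\alpha+xS)_{uv}=\alpha_{uv}+x(I_S(u)-I_S(v))$, where $I_S$ is the indicator of $S$. A balancing operation at $v$ replaces $\alpha$ by $\alpha+\frac{\alpha_v^{\text{in}}-\alpha_v^{\text{out}}}{2}\{v\}$ (incoming edges at $v$ are increased by $(\alpha_v^{\text{out}}-\alpha_v^{\text{in}})/2$, outgoing edges decreased by the same amount, a self-loop unchanged). The raising imbalance at $v$ is $\rho_v^R=\max\{0,\alpha_v^{\text{out}}-\alpha_v^{\text{in}}\}$ and the lowering imbalance is $\rho_v^L=\max\{0,\alpha_v^{\text{in}}-\alpha_v^{\text{out}}\}$. A raising operation at $v$ performs the balancing operation at $v$ if $\rho^R_v>0$ and does nothing otherwise; a lowering operation at $v$ performs it if $\rho^L_v>0$ and does nothing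 otherwise. $\alpha$ is raising-balanced if $\rho^R_v=0$ for all $v$, lowering-balanced if $\rho^L_v=0$ for all $v$. A sequence of operations (each at a specified vertex) is fair if every vertex occurs infinitely often. *)

theory Defs
  imports Complex_Main
begin

text \<open>Vertex set {1..n}; edge set E (self-loops allowed); a graph function is
  alpha :: nat => nat => real, where alpha u v is the weight of edge (u,v)
  (values on non-edges are irrelevant).\<close>

definition strongly_connected :: "nat \<Rightarrow> (nat \<times> nat) set \<Rightarrow> bool" where
  "strongly_connected n E \<longleftrightarrow> E \<subseteq> {1..n} \<times> {1..n} \<and>
     (\<forall>u\<in>{1..n}. \<forall>v\<in>{1..n}. (u, v) \<in> E\<^sup>*)"

definition alpha_in :: "(nat \<times> nat) set \<Rightarrow> (nat \<Rightarrow> nat \<Rightarrow> real) \<Rightarrow> nat \<Rightarrow> real" where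
  "alpha_in E \<alpha> v = Max ((\<lambda>u. \<alpha> u v) ` {u. (u, v) \<in> E})"

definition alpha_out :: "(nat \<times> nat) set \<Rightarrow> (nat \<Rightarrow> nat \<Rightarrow> real) \<Rightarrow> nat \<Rightarrow> real" where
  "alpha_out E \<alpha> v = Max ((\<lambda>w. \<alpha> v w) ` {w. (v, w) \<in> E})"

definition shift :: "(nat \<Rightarrow> nat \<Rightarrow> real) \<Rightarrow> real \<Rightarrow> nat set \<Rightarrow> (nat \<Rightarrow> nat \<Rightarrow> real)" where
  "shift \<alpha> x S = (\<lambda>u v. \<alpha> u v + x * ((if u \<in> S then 1 else 0) - (if v \<in> S then 1 else 0)))"

definition balance_op :: "(nat \<times> nat) set \<Rightarrow> nat \<Rightarrow> (nat \<Rightarrow> nat \<Rightarrow> real) \<Rightarrow> (nat \<Rightarrow> nat \<Rightarrow> real)" where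
  "balance_op E v \<alpha> = shift \<alpha> ((alpha_in E \<alpha> v - alpha_out E \<alpha> v) / 2) {v}"

definition rho_R :: "(nat \<times> nat) set \<Rightarrow> (nat \<Rightarrow> nat \<Rightarrow> real) \<Rightarrow> nat \<Rightarrow> real" where
  "rho_R E \<alpha> v = max 0 (alpha_out E \<alpha> v - alpha_in E \<alpha> v)"

definition rho_L :: "(nat \<times> nat) set \<Rightarrow> (nat \<Rightarrow> nat \<Rightarrow> real) \<Rightarrow> nat \<Rightarrow> real" where
  "rho_L E \<alpha> v = max 0 (alpha_in E \<alpha> v - alpha_out E \<alpha> v)"

definition raise_op :: "(nat \<times> nat) set \<Rightarrow> nat \<Rightarrow> (nat \<Rightarrow> nat \<Rightarrow> real) \<Rightarrow> (nat \<Rightarrow> nat \<Rightarrow> real)" where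
  "raise_op E v \<alpha> = (if rho_R E \<alpha> v > 0 then balance_op E v \<alpha> else \<alpha>)"

definition lower_op :: "(nat \<times> nat) set \<Rightarrow> nat \<Rightarrow> (nat \<Rightarrow> nat \<Rightarrow> real) \<Rightarrow> (nat \<Rightarrow> nat \<Rightarrow> real)" where
  "lower_op E v \<alpha> = (if rho_L E \<alpha> v > 0 then balance_op E v \<alpha> else \<alpha>)"

definition raising_balanced :: "nat \<Rightarrow> (nat \<times> nat) set \<Rightarrow> (nat \<Rightarrow> nat \<Rightarrow> real) \<Rightarrow> bool" where
  "raising_balanced n E \<alpha> \<longleftrightarrow> (\<forall>v\<in>{1..n}. rho_R E \<alpha> v = 0)"

definition lowering_balanced :: "nat \<Rightarrow> (nat \<times> nat) set \<Rightarrow> (nat \<Rightarrow> nat \<Rightarrow> real) \<Rightarrow> bool" where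
  "lowering_balanced n E \<alpha> \<longleftrightarrow> (\<forall>v\<in>{1..n}. rho_L E \<alpha> v = 0)"

primrec run :: "(nat \<Rightarrow> 'g \<Rightarrow> 'g) \<Rightarrow> (nat \<Rightarrow> nat) \<Rightarrow> 'g \<Rightarrow> nat \<Rightarrow> 'g" where
  "run op \<sigma> \<alpha> 0 = \<alpha>"
| "run op \<sigma> \<alpha> (Suc k) = op (\<sigma> k) (run op \<sigma> \<alpha> k)"

definition fair :: "nat \<Rightarrow> (nat \<Rightarrow> nat) \<Rightarrow> bool" where
  "fair n \<sigma> \<longleftrightarrow> (\<forall>k. \<sigma> k \<in> {1..n}) \<and> (\<forall>v\<in>{1..n}. infinite {k. \<sigma> k = v})"

end

theory Submission
  imports Defs
begin

text \<open>Every raising operation changes \<open>\<alpha>\<close> by a potential: the iterates are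
  \<open>\<alpha> u v + p u - p v\<close> for a potential \<open>p\<close> that only decreases, the operation at \<open>v\<close> lowering
  \<open>p v\<close> by \<open>\<rho>\<^sup>R\<^sub>v / 2\<close>. A nonpositive potential \<open>q\<close> that makes \<open>\<alpha>\<close> raising-balanced is never
  overtaken: if \<open>q \<le> p\<close> before a raising operation, then also after it. Such potentials exist: if
  \<open>\<mu>\<close> is the maximum mean weight of a cycle, the longest-path potential for the weights \<open>\<alpha> - \<mu>\<close>
  brings every edge weight down to at most \<open>\<mu>\<close> while each vertex keeps an incoming edge of
  weight \<open>\<mu>\<close>. Hence the potentials decrease to a limit, which is balanced by fairness and
  continuity and dominates every nonpositive balancing potential. Being the greatest of them, it
  does not depend on the order of the operations. Lowering operations are raising operations on
  the converse graph with transposed weights.\<close>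

lemma Max_image_le_Max_image_add:
  fixes f g :: "'a \<Rightarrow> 'b::linordered_ab_group_add"
  assumes "finite S" and "\<And>x. x \<in> S \<Longrightarrow> f x \<le> g x + d" and "0 \<le> d"
  shows "Max (f ` S) \<le> Max (g ` S) + d"
proof (cases "S = {}")
  case False
  then obtain x where "x \<in> S" "Max (f ` S) = f x"
    using Max_in[of "f ` S"] \<open>finite S\<close> by (metis empty_is_image finite_imageI imageE)
  moreover have "g x \<le> Max (g ` S)"
    using \<open>finite S\<close> \<open>x \<in> S\<close> by simp
  ultimately show ?thesis
    using assms(2)[of x] by (simp add: add_right_mono order_trans)
qed (use \<open>0 \<le> d\<close> in simp)

lemma tendsto_Max_image:
  fixes f :: "'i \<Rightarrow> 'a \<Rightarrow> 'b::linorder_topology"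
  assumes "finite S" and "\<And>x. x \<in> S \<Longrightarrow> ((\<lambda>k. f k x) \<longlongrightarrow> g x) F"
  shows "((\<lambda>k. Max (f k ` S)) \<longlongrightarrow> Max (g ` S)) F"
  using assms
proof (induction S rule: finite_induct)
  case (insert x S)
  then show ?case
    by (cases "S = {}") (auto intro!: tendsto_max)
qed simp

abbreviation walk :: "('a \<times> 'a) set \<Rightarrow> 'a list \<Rightarrow> bool" where
  "walk E \<equiv> successively (\<lambda>u v. (u, v) \<in> E)"

fun weight :: "('a \<Rightarrow> 'a \<Rightarrow> 'b::comm_monoid_add) \<Rightarrow> 'a list \<Rightarrow> 'b" where
  "weight \<beta> (u # v # xs) = \<beta> u v + weight \<beta> (v # xs)"
| "weight \<beta> _ = 0"

lemma weight_append: "weight \<beta> (xs @ y # ys) = weight \<beta> (xs @ [y]) + weight \<beta> (y # ys)"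
  by (induction xs rule: induct_list012) (simp_all add: add.assoc)

lemma weight_snoc: "xs \<noteq> [] \<Longrightarrow> weight \<beta> (xs @ [v]) = weight \<beta> xs + \<beta> (last xs) v"
  by (induction xs rule: induct_list012) (simp_all add: add.assoc)

lemma weight_diff_const:
  "weight (\<lambda>u v. \<beta> u v - c) xs = weight \<beta> xs - c * real (length xs - 1)"
  by (induction xs rule: induct_list012) (simp_all add: algebra_simps)

lemma walk_cut_cycle:
  assumes "walk E (as @ y # bs @ y # cs)"
  shows "walk E (as @ y # cs)" and "walk E (y # bs @ [y])"
proof -
  have "as @ y # bs @ y # cs = as @ (y # bs @ [y]) @ cs"
    by simp
  with assms have "walk E as" "walk E (y # bs @ [y])" "walk E cs"
    "as \<noteq> [] \<Longrightarrow> (last as, y) \<in> E" "cs \<noteq> [] \<Longrightarrow> (y, hd cs) \<in> E"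
    by (simp_all only: successively_append_iff) auto
  then show "walk E (as @ y # cs)" and "walk E (y # bs @ [y])"
    by (auto simp: successively_append_iff successively_Cons)
qed

lemma weight_cut_cycle:
  "weight \<beta> (as @ y # bs @ y # cs) = weight \<beta> (as @ y # cs) + weight \<beta> (y # bs @ [y])"
proof -
  have "weight \<beta> (as @ y # bs @ y # cs) = weight \<beta> (as @ [y]) + weight \<beta> (y # bs @ y # cs)"
    by (rule weight_append)
  also have "\<dots> = weight \<beta> (as @ [y]) + weight \<beta> (y # bs @ [y]) + weight \<beta> (y # cs)"
    using weight_append[of \<beta> "y # bs" y cs] by (simp add: add.assoc)
  also have "\<dots> = weight \<beta> (as @ y # cs) + weight \<beta> (y # bs @ [y])"
    using weight_append[of \<beta> as y cs] by (simp add: ac_simps)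
  finally show ?thesis .
qed

lemma set_tl_walk_subset: "E \<subseteq> V \<times> V \<Longrightarrow> walk E xs \<Longrightarrow> set (tl xs) \<subseteq> V"
  by (induction xs rule: induct_list012) auto

lemma rtrancl_imp_walk:
  "(u, v) \<in> E\<^sup>* \<Longrightarrow> \<exists>xs. walk E xs \<and> xs \<noteq> [] \<and> hd xs = u \<and> last xs = v"
proof (induction rule: rtrancl_induct)
  case base
  show ?case
    by (intro exI[of _ "[u]"]) simp
next
  case (step y z)
  then obtain xs where "walk E xs" "xs \<noteq> []" "hd xs = u" "last xs = y"
    by blast
  with step.hyps(2) show ?case
    by (intro exI[of _ "xs @ [z]"]) (auto simp: successively_append_iff)
qed

definition simple_cycles :: "('a \<times> 'a) set \<Rightarrow> 'a list set" where
  "simple_cycles E = {xs. walk E xs \<and> tl xs \<noteq> [] \<and> hd xs = last xs \<and> distinct (tl xs)}"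

lemma closed_walk_weight_nonpos:
  fixes \<beta> :: "'a \<Rightarrow> 'a \<Rightarrow> 'b::ordered_comm_monoid_add"
  assumes simple: "\<And>xs. xs \<in> simple_cycles E \<Longrightarrow> weight \<beta> xs \<le> 0"
  shows "walk E xs \<Longrightarrow> xs \<noteq> [] \<Longrightarrow> hd xs = last xs \<Longrightarrow> weight \<beta> xs \<le> 0"
proof (induction "length xs" arbitrary: xs rule: less_induct)
  case less
  show ?case
  proof (cases "distinct (tl xs)")
    case True
    show ?thesis
    proof (cases "tl xs = []")
      case True
      then show ?thesis
        by (cases xs) auto
    next
      case False
      with less.prems \<open>distinct (tl xs)\<close> have "xs \<in> simple_cycles E"
        by (simp add: simple_cycles_def)
      then show ?thesis
        by (rule simple)
    qed
  next
    case False
    then obtain as y bs cs where tl: "tl xs = as @ y # bs @ y # cs"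
      using not_distinct_decomp by fastforce
    define u where "u = hd xs"
    have xs: "xs = (u # as) @ y # bs @ y # cs"
      using tl less.prems(2) by (cases xs) (auto simp: u_def)
    have walks: "walk E (u # as @ y # cs)" "walk E (y # bs @ [y])"
      using walk_cut_cycle[of E "u # as"] less.prems(1) xs by simp_all
    have "weight \<beta> (u # as @ y # cs) \<le> 0"
      using less.hyps[of "u # as @ y # cs"] walks less.prems(3) xs by auto
    moreover have "weight \<beta> (y # bs @ [y]) \<le> 0"
      using less.hyps[of "y # bs @ [y]"] walks xs by auto
    ultimately show ?thesis
      using weight_cut_cycle[of \<beta> "u # as" y bs cs] xs by (simp add: add_nonpos_nonpos)
  qed
qed

lemma walk_weight_le_path:
  fixes \<beta> :: "'a \<Rightarrow> 'a \<Rightarrow> 'b::ordered_comm_monoid_add"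
  assumes closed_walks: "\<And>xs. walk E xs \<Longrightarrow> xs \<noteq> [] \<Longrightarrow> hd xs = last xs \<Longrightarrow> weight \<beta> xs \<le> 0"
  shows "walk E xs \<Longrightarrow> xs \<noteq> [] \<Longrightarrow> \<exists>ys. walk E ys \<and> distinct ys \<and> ys \<noteq> [] \<and>
    hd ys = hd xs \<and> last ys = last xs \<and> weight \<beta> xs \<le> weight \<beta> ys"
proof (induction "length xs" arbitrary: xs rule: less_induct)
  case less
  show ?case
  proof (cases "distinct xs")
    case True
    with less.prems show ?thesis
      by blast
  next
    case False
    then obtain as y bs cs where xs: "xs = as @ y # bs @ y # cs"
      using not_distinct_decomp by fastforce
    have walks: "walk E (as @ y # cs)" "walk E (y # bs @ [y])"
      using walk_cut_cycle less.prems(1) xs by simp_all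
    have ends: "hd (as @ y # cs) = hd xs" "last (as @ y # cs) = last xs"
      using xs by (cases as; simp)+
    have "weight \<beta> (y # bs @ [y]) \<le> 0"
      using closed_walks walks(2) by simp
    then have "weight \<beta> xs \<le> weight \<beta> (as @ y # cs)"
      using weight_cut_cycle[of \<beta> as y bs cs] xs by (simp add: add_decreasing2)
    moreover obtain ys where "walk E ys" "distinct ys" "ys \<noteq> []" "hd ys = hd xs" "last ys = last xs"
      "weight \<beta> (as @ y # cs) \<le> weight \<beta> ys"
      using less.hyps[of "as @ y # cs"] walks(1) ends xs by auto
    ultimately show ?thesis
      using order_trans by blast
  qed
qed

lemma finite_simple_cycles:
  assumes "finite V" and "E \<subseteq> V \<times> V"
  shows "finite (simple_cycles E)"
proof (rule finite_subset)
  show "simple_cycles E \<subseteq> (\<lambda>ys. last ys # ys) ` {ys. set ys \<subseteq> V \<and> distinct ys}"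
  proof
    fix xs assume "xs \<in> simple_cycles E"
    then have "walk E xs" "tl xs \<noteq> []" "hd xs = last xs" "distinct (tl xs)"
      by (simp_all add: simple_cycles_def)
    then have "tl xs \<in> {ys. set ys \<subseteq> V \<and> distinct ys}"
      using set_tl_walk_subset[OF \<open>E \<subseteq> V \<times> V\<close>] by simp
    moreover have "xs = last (tl xs) # tl xs"
      using \<open>tl xs \<noteq> []\<close> \<open>hd xs = last xs\<close> by (cases xs) simp_all
    ultimately show "xs \<in> (\<lambda>ys. last ys # ys) ` {ys. set ys \<subseteq> V \<and> distinct ys}"
      by (rule rev_image_eqI)
  qed
qed (intro finite_imageI finite_subset_distinct \<open>finite V\<close>)

lemma simple_cycles_nonempty:
  assumes "walk E xs" and "tl xs \<noteq> []" and "hd xs = last xs"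
  shows "simple_cycles E \<noteq> {}"
proof
  assume "simple_cycles E = {}"
  \<comment> \<open>Then, vacuously, every closed walk has nonpositive length, contradicting the given one.\<close>
  then have "weight (\<lambda>_ _. 1::real) xs \<le> 0"
    using closed_walk_weight_nonpos[of E "\<lambda>_ _. 1" xs] assms by fastforce
  moreover have "weight (\<lambda>_ _. 1::real) ys = real (length ys - 1)" for ys :: "'a list"
    by (induction ys rule: induct_list012) auto
  ultimately show False
    using \<open>tl xs \<noteq> []\<close> by (cases xs) auto
qed

lemma max_cycle_mean:
  fixes \<alpha> :: "'a \<Rightarrow> 'a \<Rightarrow> real"
  assumes "finite V" and "E \<subseteq> V \<times> V"
    and cycle: "walk E xs\<^sub>0" "tl xs\<^sub>0 \<noteq> []" "hd xs\<^sub>0 = last xs\<^sub>0"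
  obtains \<mu> cs where "walk E cs" "tl cs \<noteq> []" "hd cs = last cs"
    and "weight (\<lambda>u v. \<alpha> u v - \<mu>) cs = 0"
    and "\<And>xs. walk E xs \<Longrightarrow> xs \<noteq> [] \<Longrightarrow> hd xs = last xs \<Longrightarrow> weight (\<lambda>u v. \<alpha> u v - \<mu>) xs \<le> 0"
proof -
  define mean where "mean xs = weight \<alpha> xs / real (length xs - 1)" for xs
  have edges_pos: "0 < real (length xs - 1)" if "tl xs \<noteq> []" for xs :: "'a list"
    using that by (cases xs) auto
  define \<mu> where "\<mu> = Max (mean ` simple_cycles E)"
  have finite: "finite (simple_cycles E)"
    using \<open>finite V\<close> \<open>E \<subseteq> V \<times> V\<close> by (rule finite_simple_cycles)
  moreover have "simple_cycles E \<noteq> {}"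
    using cycle by (rule simple_cycles_nonempty)
  ultimately have "\<mu> \<in> mean ` simple_cycles E"
    unfolding \<mu>_def by (intro Max_in) simp_all
  then obtain cs where "cs \<in> simple_cycles E" "\<mu> = mean cs"
    by blast
  show thesis
  proof (rule that)
    show "walk E cs" "tl cs \<noteq> []" "hd cs = last cs"
      using \<open>cs \<in> simple_cycles E\<close> by (simp_all add: simple_cycles_def)
    show "weight (\<lambda>u v. \<alpha> u v - \<mu>) cs = 0"
      using \<open>\<mu> = mean cs\<close> edges_pos[OF \<open>tl cs \<noteq> []\<close>] by (simp add: weight_diff_const mean_def)
  next
    fix xs assume "walk E xs" "xs \<noteq> []" "hd xs = last xs"
    then show "weight (\<lambda>u v. \<alpha> u v - \<mu>) xs \<le> 0"
    proof (rule closed_walk_weight_nonpos[rotated])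
      fix ys assume "ys \<in> simple_cycles E"
      then have "mean ys \<le> \<mu>" and "tl ys \<noteq> []"
        using finite unfolding \<mu>_def by (simp_all add: simple_cycles_def)
      then show "weight (\<lambda>u v. \<alpha> u v - \<mu>) ys \<le> 0"
        using edges_pos[of ys] by (simp add: weight_diff_const mean_def pos_divide_le_eq mult.commute)
    qed
  qed
qed

definition simple_paths :: "('a \<times> 'a) set \<Rightarrow> 'a \<Rightarrow> 'a \<Rightarrow> 'a list set" where
  "simple_paths E u v = {ys. walk E ys \<and> distinct ys \<and> ys \<noteq> [] \<and> hd ys = u \<and> last ys = v}"

definition heaviest_path_weight :: "('a \<times> 'a) set \<Rightarrow> ('a \<Rightarrow> 'a \<Rightarrow> real) \<Rightarrow> 'a \<Rightarrow> 'a \<Rightarrow> real" where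
  "heaviest_path_weight E \<beta> u v = Max (weight \<beta> ` simple_paths E u v)"

lemma finite_simple_paths:
  assumes "finite V" and "E \<subseteq> V \<times> V"
  shows "finite (simple_paths E u v)"
proof (rule finite_subset)
  show "simple_paths E u v \<subseteq> (#) u ` {ys. set ys \<subseteq> V \<and> distinct ys}"
  proof
    fix ys assume "ys \<in> simple_paths E u v"
    then have "walk E ys" "ys \<noteq> []" "hd ys = u" "distinct ys"
      by (simp_all add: simple_paths_def)
    then have "tl ys \<in> {ys. set ys \<subseteq> V \<and> distinct ys}"
      using set_tl_walk_subset[OF \<open>E \<subseteq> V \<times> V\<close>] by (simp add: distinct_tl)
    moreover have "ys = u # tl ys"
      using \<open>ys \<noteq> []\<close> \<open>hd ys = u\<close> by (cases ys) simp_all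
    ultimately show "ys \<in> (#) u ` {ys. set ys \<subseteq> V \<and> distinct ys}"
      by (rule rev_image_eqI)
  qed
qed (intro finite_imageI finite_subset_distinct \<open>finite V\<close>)

context
  fixes V :: "'a set" and E :: "('a \<times> 'a) set" and \<beta> :: "'a \<Rightarrow> 'a \<Rightarrow> real"
  assumes finite: "finite V" and edges: "E \<subseteq> V \<times> V"
    and closed_walks: "\<And>xs. walk E xs \<Longrightarrow> xs \<noteq> [] \<Longrightarrow> hd xs = last xs \<Longrightarrow> weight \<beta> xs \<le> 0"
begin

lemma walk_weight_le_heaviest_path:
  assumes "walk E xs" and "xs \<noteq> []"
  shows "weight \<beta> xs \<le> heaviest_path_weight E \<beta> (hd xs) (last xs)"
proof -
  obtain ys where "walk E ys" "distinct ys" "ys \<noteq> []" "hd ys = hd xs" "last ys = last xs"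
    and heavier: "weight \<beta> xs \<le> weight \<beta> ys"
    using walk_weight_le_path[OF closed_walks assms] by blast
  then have "ys \<in> simple_paths E (hd xs) (last xs)"
    by (simp add: simple_paths_def)
  then have "weight \<beta> ys \<le> heaviest_path_weight E \<beta> (hd xs) (last xs)"
    unfolding heaviest_path_weight_def using finite_simple_paths[OF finite edges]
    by (intro Max_ge) simp_all
  with heavier show ?thesis
    by linarith
qed

lemma heaviest_path_weight_attained:
  assumes "(u, v) \<in> E\<^sup>*"
  obtains ys where "walk E ys" "ys \<noteq> []" "hd ys = u" "last ys = v"
    and "heaviest_path_weight E \<beta> u v = weight \<beta> ys"
proof -
  obtain xs where "walk E xs" "xs \<noteq> []" "hd xs = u" "last xs = v"
    using rtrancl_imp_walk[OF assms] by blast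
  then have "simple_paths E u v \<noteq> {}"
    using walk_weight_le_path[OF closed_walks] unfolding simple_paths_def by fastforce
  then have "heaviest_path_weight E \<beta> u v \<in> weight \<beta> ` simple_paths E u v"
    unfolding heaviest_path_weight_def using finite_simple_paths[OF finite edges]
    by (intro Max_in) simp_all
  with that show thesis
    by (auto simp: simple_paths_def)
qed

lemma heaviest_path_weight_edge:
  assumes "(c, u) \<in> E\<^sup>*" and "(u, v) \<in> E"
  shows "heaviest_path_weight E \<beta> c u + \<beta> u v \<le> heaviest_path_weight E \<beta> c v"
proof -
  obtain ys where ys: "walk E ys" "ys \<noteq> []" "hd ys = c" "last ys = u"
    "heaviest_path_weight E \<beta> c u = weight \<beta> ys"
    by (rule heaviest_path_weight_attained[OF assms(1)])
  with assms(2) have "walk E (ys @ [v])"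
    by (simp add: successively_append_iff)
  from walk_weight_le_heaviest_path[OF this] ys show ?thesis
    by (simp add: weight_snoc)
qed

lemma heaviest_path_weight_tight:
  assumes critical: "walk E cs" "tl cs \<noteq> []" "hd cs = last cs" "weight \<beta> cs = 0"
    and "(hd cs, v) \<in> E\<^sup>*"
  obtains u where "(u, v) \<in> E"
    and "heaviest_path_weight E \<beta> (hd cs) v \<le> heaviest_path_weight E \<beta> (hd cs) u + \<beta> u v"
proof -
  let ?q = "heaviest_path_weight E \<beta> (hd cs)"
  have "\<exists>zs. walk E zs \<and> tl zs \<noteq> [] \<and> hd zs = hd cs \<and> last zs = v \<and> ?q v \<le> weight \<beta> zs"
  proof (cases "v = hd cs")
    case True
    \<comment> \<open>At its own start vertex, the tight edge comes from the critical cycle.\<close>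
    obtain ys where "walk E ys" "ys \<noteq> []" "hd ys = hd cs" "last ys = hd cs" "?q (hd cs) = weight \<beta> ys"
      by (rule heaviest_path_weight_attained[OF rtrancl_refl])
    then have "?q (hd cs) \<le> 0"
      using closed_walks by simp
    with True critical show ?thesis
      by (intro exI[of _ cs]) simp
  next
    case False
    obtain ys where "walk E ys" "ys \<noteq> []" "hd ys = hd cs" "last ys = v" "?q v = weight \<beta> ys"
      by (rule heaviest_path_weight_attained[OF assms(5)])
    moreover from this False have "tl ys \<noteq> []"
      by (cases ys) auto
    ultimately show ?thesis
      by auto
  qed
  then obtain zs where zs: "walk E zs" "tl zs \<noteq> []" "hd zs = hd cs" "last zs = v" "?q v \<le> weight \<beta> zs"
    by blast
  define ws where "ws = butlast zs"
  have "ws \<noteq> []"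
    using zs(2) unfolding ws_def by (cases zs) auto
  have "zs = ws @ [v]"
    using zs(2,4) unfolding ws_def by (metis append_butlast_last_id list.sel(2))
  with zs \<open>ws \<noteq> []\<close> have "walk E ws" "(last ws, v) \<in> E" "hd ws = hd cs"
    by (auto simp: successively_append_iff)
  with walk_weight_le_heaviest_path[OF \<open>walk E ws\<close> \<open>ws \<noteq> []\<close>]
  have "weight \<beta> ws \<le> ?q (last ws)"
    by simp
  with zs(5) \<open>zs = ws @ [v]\<close> \<open>ws \<noteq> []\<close> show thesis
    by (intro that[OF \<open>(last ws, v) \<in> E\<close>]) (simp add: weight_snoc)
qed

end

definition reweight :: "(nat \<Rightarrow> nat \<Rightarrow> real) \<Rightarrow> (nat \<Rightarrow> real) \<Rightarrow> nat \<Rightarrow> nat \<Rightarrow> real" where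
  "reweight \<alpha> p = (\<lambda>u v. \<alpha> u v + p u - p v)"

lemma reweight_zero [simp]: "reweight \<alpha> (\<lambda>_. 0) = \<alpha>"
  by (simp add: reweight_def)

definition raise_potential ::
    "(nat \<times> nat) set \<Rightarrow> (nat \<Rightarrow> nat \<Rightarrow> real) \<Rightarrow> nat \<Rightarrow> (nat \<Rightarrow> real) \<Rightarrow> nat \<Rightarrow> real" where
  "raise_potential E \<alpha> v p = p(v := p v - rho_R E (reweight \<alpha> p) v / 2)"

lemma rho_R_nonneg: "0 \<le> rho_R E \<alpha> v"
  by (simp add: rho_R_def)

lemma raise_op_reweight: "raise_op E v (reweight \<alpha> p) = reweight \<alpha> (raise_potential E \<alpha> v p)"
proof (cases "0 < rho_R E (reweight \<alpha> p) v")
  case True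
  then have "rho_R E (reweight \<alpha> p) v =
      alpha_out E (reweight \<alpha> p) v - alpha_in E (reweight \<alpha> p) v"
    by (simp add: rho_R_def max_def split: if_splits)
  with True show ?thesis
    by (auto simp: raise_op_def balance_op_def shift_def raise_potential_def reweight_def
        fun_eq_iff field_simps)
next
  case False
  then have "rho_R E (reweight \<alpha> p) v = 0"
    using rho_R_nonneg[of E "reweight \<alpha> p" v] by linarith
  with False show ?thesis
    by (simp add: raise_op_def raise_potential_def)
qed

lemma run_raise_op_reweight:
  "run (raise_op E) \<sigma> (reweight \<alpha> p) k = reweight \<alpha> (run (raise_potential E \<alpha>) \<sigma> p k)"
  by (induction k) (simp_all add: raise_op_reweight)

lemma raise_potential_le: "raise_potential E \<alpha> v p \<le> p"
  by (simp add: raise_potential_def le_fun_def rho_R_nonneg)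

lemma decseq_run_raise_potential: "decseq (\<lambda>k. run (raise_potential E \<alpha>) \<sigma> p k u)"
  by (rule decseq_SucI) (simp add: raise_potential_le[unfolded le_fun_def])

lemma finite_in_neighbours: "finite E \<Longrightarrow> finite {u. (u, v) \<in> E}"
  by (rule finite_subset[of _ "fst ` E"]) force+

lemma finite_out_neighbours: "finite E \<Longrightarrow> finite {w. (v, w) \<in> E}"
  by (rule finite_subset[of _ "snd ` E"]) force+

lemma raise_potential_ge:
  assumes "finite E" and balanced: "rho_R E (reweight \<alpha> q) v = 0" and "q \<le> p"
  shows "q \<le> raise_potential E \<alpha> v p"
proof -
  define d where "d = p v - q v"
  have "0 \<le> d"
    using \<open>q \<le> p\<close> by (simp add: d_def le_fun_def)
  \<comment> \<open>Compared with \<open>q\<close>, the potential \<open>p\<close> lowers \<open>alpha_in\<close> and raises \<open>alpha_out\<close> at \<open>v\<close> by at most \<open>d\<close>.\<close>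
  have "alpha_in E (reweight \<alpha> q) v \<le> alpha_in E (reweight \<alpha> p) v + d"
    unfolding alpha_in_def using \<open>q \<le> p\<close> \<open>0 \<le> d\<close>
    by (intro Max_image_le_Max_image_add finite_in_neighbours \<open>finite E\<close>)
      (auto simp: reweight_def d_def le_fun_def intro: add_mono)
  moreover have "alpha_out E (reweight \<alpha> p) v \<le> alpha_out E (reweight \<alpha> q) v + d"
    unfolding alpha_out_def using \<open>q \<le> p\<close> \<open>0 \<le> d\<close>
    by (intro Max_image_le_Max_image_add finite_out_neighbours \<open>finite E\<close>)
      (auto simp: reweight_def d_def le_fun_def)
  moreover have "alpha_out E (reweight \<alpha> q) v \<le> alpha_in E (reweight \<alpha> q) v"
    using balanced by (simp add: rho_R_def)
  ultimately have "rho_R E (reweight \<alpha> p) v \<le> 2 * d"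
    using \<open>0 \<le> d\<close> by (simp add: rho_R_def)
  then show ?thesis
    using \<open>q \<le> p\<close> by (simp add: raise_potential_def le_fun_def d_def)
qed

lemma run_raise_potential_ge:
  assumes "finite E" and "\<forall>k. \<sigma> k \<in> {1..n}" and "raising_balanced n E (reweight \<alpha> q)"
    and "q \<le> p"
  shows "q \<le> run (raise_potential E \<alpha>) \<sigma> p k"
proof (induction k)
  case (Suc k)
  then show ?case
    using assms by (auto simp: raising_balanced_def intro: raise_potential_ge)
qed (use \<open>q \<le> p\<close> in simp)

lemma tendsto_rho_R:
  assumes "finite E" and "\<And>u. (\<lambda>k. p k u) \<longlonglongrightarrow> L u"
  shows "(\<lambda>k. rho_R E (reweight \<alpha> (p k)) v) \<longlonglongrightarrow> rho_R E (reweight \<alpha> L) v"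
proof -
  have "(\<lambda>k. alpha_in E (reweight \<alpha> (p k)) v) \<longlonglongrightarrow> alpha_in E (reweight \<alpha> L) v"
    unfolding alpha_in_def reweight_def
    by (intro tendsto_Max_image finite_in_neighbours \<open>finite E\<close> tendsto_intros assms(2))
  moreover have "(\<lambda>k. alpha_out E (reweight \<alpha> (p k)) v) \<longlonglongrightarrow> alpha_out E (reweight \<alpha> L) v"
    unfolding alpha_out_def reweight_def
    by (intro tendsto_Max_image finite_out_neighbours \<open>finite E\<close> tendsto_intros assms(2))
  ultimately show ?thesis
    unfolding rho_R_def by (intro tendsto_intros)
qed

lemma raising_balanced_limit:
  assumes "finite E" and "fair n \<sigma>"
    and lim: "\<And>u. (\<lambda>k. run (raise_potential E \<alpha>) \<sigma> p k u) \<longlonglongrightarrow> L u"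
  shows "raising_balanced n E (reweight \<alpha> L)"
  unfolding raising_balanced_def
proof
  fix v assume "v \<in> {1..n}"
  let ?p = "run (raise_potential E \<alpha>) \<sigma> p"
  let ?r = "\<lambda>k. rho_R E (reweight \<alpha> (?p k)) v"
  let ?R = "rho_R E (reweight \<alpha> L) v"
  have "?r \<longlonglongrightarrow> ?R"
    using \<open>finite E\<close> lim by (rule tendsto_rho_R)
  have "(\<lambda>k. ?p k v - ?p (Suc k) v) \<longlonglongrightarrow> L v - L v"
    by (intro tendsto_diff lim LIMSEQ_Suc)
  then have steps: "(\<lambda>k. ?p k v - ?p (Suc k) v) \<longlonglongrightarrow> 0"
    by simp
  have "\<exists>\<^sub>F k in sequentially. \<sigma> k = v"
    using \<open>fair n \<sigma>\<close> \<open>v \<in> {1..n}\<close> frequently_cofinite[of "\<lambda>k. \<sigma> k = v"]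
    by (simp add: fair_def cofinite_eq_sequentially)
  show "?R = 0"
  proof (rule ccontr)
    assume "?R \<noteq> 0"
    then have "0 < ?R"
      using rho_R_nonneg[of E "reweight \<alpha> L" v] by linarith
    \<comment> \<open>Infinitely often the step at \<open>v\<close> lowers \<open>p v\<close> by \<open>?r k / 2 > ?R / 4\<close>, yet \<open>p v\<close> converges.\<close>
    have "\<forall>\<^sub>F k in sequentially. ?R / 2 < ?r k"
      using order_tendstoD(1)[OF \<open>?r \<longlonglongrightarrow> ?R\<close>, of "?R / 2"] \<open>0 < ?R\<close> by simp
    moreover have "\<forall>\<^sub>F k in sequentially. ?p k v - ?p (Suc k) v < ?R / 4"
      using order_tendstoD(2)[OF steps, of "?R / 4"] \<open>0 < ?R\<close> by simp
    ultimately have "\<exists>\<^sub>F k in sequentially. \<sigma> k = v \<and> ?R / 2 < ?r k \<and> ?p k v - ?p (Suc k) v < ?R / 4"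
      using frequently_eventually_frequently[OF \<open>\<exists>\<^sub>F k in sequentially. \<sigma> k = v\<close>] eventually_conj
      by blast
    then obtain k where "\<sigma> k = v" "?R / 2 < ?r k" "?p k v - ?p (Suc k) v < ?R / 4"
      using frequently_ex by blast
    then show False
      by (simp add: raise_potential_def)
  qed
qed

definition balancing_potentials :: "nat \<Rightarrow> (nat \<times> nat) set \<Rightarrow> (nat \<Rightarrow> nat \<Rightarrow> real) \<Rightarrow> (nat \<Rightarrow> real) set" where
  "balancing_potentials n E \<alpha> = {q. raising_balanced n E (reweight \<alpha> q) \<and> q \<le> (\<lambda>_. 0)}"

lemma run_raise_potential_tendsto_Greatest:
  assumes "finite E" and "fair n \<sigma>" and "q\<^sub>0 \<in> balancing_potentials n E \<alpha>"
  defines "G \<equiv> Greatest (\<lambda>q. q \<in> balancing_potentials n E \<alpha>)"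
  shows "G \<in> balancing_potentials n E \<alpha>"
    and "(\<lambda>k. run (raise_potential E \<alpha>) \<sigma> (\<lambda>_. 0) k u) \<longlonglongrightarrow> G u"
proof -
  let ?p = "run (raise_potential E \<alpha>) \<sigma> (\<lambda>_. 0)"
  have range: "\<forall>k. \<sigma> k \<in> {1..n}"
    using \<open>fair n \<sigma>\<close> by (simp add: fair_def)
  have lower: "q \<le> ?p k" if "q \<in> balancing_potentials n E \<alpha>" for q k
    using that by (intro run_raise_potential_ge[OF \<open>finite E\<close> range]) (auto simp: balancing_potentials_def)
  have "\<exists>l. (\<lambda>k. ?p k u) \<longlonglongrightarrow> l" for u
  proof -
    have "\<forall>k. q\<^sub>0 u \<le> ?p k u"
      using lower[OF assms(3)] by (simp add: le_fun_def)
    then show ?thesis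
      using decseq_convergent[OF decseq_run_raise_potential] by blast
  qed
  then obtain L where L: "\<And>u. (\<lambda>k. ?p k u) \<longlonglongrightarrow> L u"
    by metis
  have "?p k u \<le> 0" for k u
    using decseq_run_raise_potential[unfolded decseq_def, rule_format, of 0 k] by simp
  then have "L \<in> balancing_potentials n E \<alpha>"
    using raising_balanced_limit[OF \<open>finite E\<close> \<open>fair n \<sigma>\<close> L]
      LIMSEQ_le_const2[OF L] by (auto simp: balancing_potentials_def le_fun_def)
  moreover have "q \<le> L" if "q \<in> balancing_potentials n E \<alpha>" for q
    using LIMSEQ_le_const[OF L] lower[OF that] by (auto simp: le_fun_def)
  ultimately have "G = L"
    unfolding G_def by (rule Greatest_equality)
  with \<open>L \<in> balancing_potentials n E \<alpha>\<close> L
  show "G \<in> balancing_potentials n E \<alpha>" "(\<lambda>k. ?p k u) \<longlonglongrightarrow> G u"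
    by simp_all
qed

lemma fair_raising_runs_converge:
  assumes "finite E" and "balancing_potentials n E \<alpha> \<noteq> {}"
  shows "\<exists>\<alpha>R. raising_balanced n E \<alpha>R \<and>
    (\<forall>\<sigma>. fair n \<sigma> \<longrightarrow> (\<forall>u v. (\<lambda>k. run (raise_op E) \<sigma> \<alpha> k u v) \<longlonglongrightarrow> \<alpha>R u v))"
proof (cases "\<exists>\<sigma>. fair n \<sigma>")
  case True
  then obtain \<sigma>\<^sub>0 where "fair n \<sigma>\<^sub>0" ..
  obtain q\<^sub>0 where q\<^sub>0: "q\<^sub>0 \<in> balancing_potentials n E \<alpha>"
    using assms(2) by blast
  define G where "G = Greatest (\<lambda>q. q \<in> balancing_potentials n E \<alpha>)"
  have "raising_balanced n E (reweight \<alpha> G)"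
    using run_raise_potential_tendsto_Greatest(1)[OF \<open>finite E\<close> \<open>fair n \<sigma>\<^sub>0\<close> q\<^sub>0]
    by (simp add: G_def balancing_potentials_def)
  moreover have "(\<lambda>k. run (raise_op E) \<sigma> \<alpha> k u v) \<longlonglongrightarrow> reweight \<alpha> G u v"
    if "fair n \<sigma>" for \<sigma> u v
  proof -
    let ?p = "run (raise_potential E \<alpha>) \<sigma> (\<lambda>_. 0)"
    have "run (raise_op E) \<sigma> \<alpha> k u v = \<alpha> u v + ?p k u - ?p k v" for k
      using run_raise_op_reweight[of E \<sigma> \<alpha> "\<lambda>_. 0" k] by (simp add: reweight_def)
    moreover have "(\<lambda>k. \<alpha> u v + ?p k u - ?p k v) \<longlonglongrightarrow> reweight \<alpha> G u v"
      unfolding reweight_def G_def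
      using run_raise_potential_tendsto_Greatest(2)[OF \<open>finite E\<close> that q\<^sub>0]
      by (intro tendsto_diff tendsto_add tendsto_const) simp_all
    ultimately show ?thesis
      by simp
  qed
  ultimately show ?thesis
    by blast
next
  case False
  with assms(2) show ?thesis
    by (auto simp: balancing_potentials_def)
qed

lemma raising_balancedI:
  assumes "finite E"
    and out: "\<And>v. v \<in> {1..n} \<Longrightarrow> \<exists>w. (v, w) \<in> E"
    and below: "\<And>u v. (u, v) \<in> E \<Longrightarrow> \<beta> u v \<le> \<mu>"
    and tight: "\<And>v. v \<in> {1..n} \<Longrightarrow> \<exists>u. (u, v) \<in> E \<and> \<mu> \<le> \<beta> u v"
  shows "raising_balanced n E \<beta>"
  unfolding raising_balanced_def
proof
  fix v assume "v \<in> {1..n}"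
  have "\<mu> \<le> alpha_in E \<beta> v"
    unfolding alpha_in_def using tight[OF \<open>v \<in> {1..n}\<close>] finite_in_neighbours[OF \<open>finite E\<close>]
    by (subst Max_ge_iff) auto
  \<comment> \<open>The outgoing edge keeps \<open>alpha_out\<close> from being the junk value \<open>Max {}\<close>.\<close>
  moreover have "alpha_out E \<beta> v \<le> \<mu>"
    unfolding alpha_out_def using out[OF \<open>v \<in> {1..n}\<close>] below finite_out_neighbours[OF \<open>finite E\<close>]
    by (subst Max_le_iff) auto
  ultimately show "rho_R E \<beta> v = 0"
    by (simp add: rho_R_def)
qed

lemma strongly_connected_finite: "strongly_connected n E \<Longrightarrow> finite E"
  unfolding strongly_connected_def by (auto intro: finite_subset)

lemma balancing_potentials_nonempty:
  assumes "strongly_connected n E"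
  shows "balancing_potentials n E \<alpha> \<noteq> {}"
proof (cases "E = {}")
  case True
  \<comment> \<open>Then \<open>alpha_in\<close> and \<open>alpha_out\<close> are both the junk value \<open>Max {}\<close>.\<close>
  then have "(\<lambda>_. 0) \<in> balancing_potentials n E \<alpha>"
    by (simp add: balancing_potentials_def raising_balanced_def rho_R_def alpha_in_def alpha_out_def)
  then show ?thesis
    by blast
next
  case False
  let ?V = "{1..n}"
  have E: "E \<subseteq> ?V \<times> ?V" and reach: "\<And>u v. u \<in> ?V \<Longrightarrow> v \<in> ?V \<Longrightarrow> (u, v) \<in> E\<^sup>*"
    using assms by (auto simp: strongly_connected_def)
  have "finite E"
    using assms by (rule strongly_connected_finite)
  obtain a b where "(a, b) \<in> E"
    using False by auto
  then have "a \<in> ?V" "b \<in> ?V"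
    using E by auto
  obtain xs where "walk E xs" "xs \<noteq> []" "hd xs = b" "last xs = a"
    using rtrancl_imp_walk[OF reach[OF \<open>b \<in> ?V\<close> \<open>a \<in> ?V\<close>]] by blast
  with \<open>(a, b) \<in> E\<close> have "walk E (a # xs)" "tl (a # xs) \<noteq> []" "hd (a # xs) = last (a # xs)"
    by (auto simp: successively_Cons)
  then obtain \<mu> cs where critical: "walk E cs" "tl cs \<noteq> []" "hd cs = last cs"
      "weight (\<lambda>u v. \<alpha> u v - \<mu>) cs = 0"
    and closed_walks: "\<And>xs. walk E xs \<Longrightarrow> xs \<noteq> [] \<Longrightarrow> hd xs = last xs \<Longrightarrow>
      weight (\<lambda>u v. \<alpha> u v - \<mu>) xs \<le> 0"
    by (rule max_cycle_mean[where \<alpha> = \<alpha>, OF finite_atLeastAtMost E]) blast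
  have "hd cs \<in> ?V"
    using critical(1,2) E by (cases cs; cases "tl cs") auto
  define q where "q = heaviest_path_weight E (\<lambda>u v. \<alpha> u v - \<mu>) (hd cs)"
  \<comment> \<open>Only the values on \<open>{1..n}\<close> matter; normalise them to be nonpositive.\<close>
  define q' where "q' u = (if u \<in> ?V then q u - Max (q ` ?V) else 0)" for u
  have "q' \<le> (\<lambda>_. 0)"
    by (auto simp: q'_def le_fun_def)
  have reweight_q': "reweight \<alpha> q' u v = \<alpha> u v + q u - q v" if "(u, v) \<in> E" for u v
    using E that by (auto simp: reweight_def q'_def)
  have "raising_balanced n E (reweight \<alpha> q')"
  proof (rule raising_balancedI[OF \<open>finite E\<close>])
    fix v assume "v \<in> ?V"
    have "(v, b) \<in> E\<^sup>+"
      using reach[OF \<open>v \<in> ?V\<close> \<open>a \<in> ?V\<close>] \<open>(a, b) \<in> E\<close> by (rule rtrancl_into_trancl1)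
    then show "\<exists>w. (v, w) \<in> E"
      by (blast dest: tranclD)
    obtain u where "(u, v) \<in> E" "q v \<le> q u + (\<alpha> u v - \<mu>)"
      using heaviest_path_weight_tight[OF finite_atLeastAtMost E closed_walks critical
          reach[OF \<open>hd cs \<in> ?V\<close> \<open>v \<in> ?V\<close>]]
      unfolding q_def by blast
    then show "\<exists>u. (u, v) \<in> E \<and> \<mu> \<le> reweight \<alpha> q' u v"
      using reweight_q' by force
  next
    fix u v assume "(u, v) \<in> E"
    then have "q u + (\<alpha> u v - \<mu>) \<le> q v"
      using heaviest_path_weight_edge[OF finite_atLeastAtMost E closed_walks] reach[OF \<open>hd cs \<in> ?V\<close>] E
      unfolding q_def by blast
    with \<open>(u, v) \<in> E\<close> show "reweight \<alpha> q' u v \<le> \<mu>"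
      by (simp add: reweight_q')
  qed
  with \<open>q' \<le> (\<lambda>_. 0)\<close> show ?thesis
    by (auto simp: balancing_potentials_def)
qed

lemma rho_L_eq_rho_R_converse: "rho_L E \<alpha> v = rho_R (E\<inverse>) (\<lambda>u w. \<alpha> w u) v"
  by (simp add: rho_L_def rho_R_def alpha_in_def alpha_out_def)

lemma lower_op_eq_raise_op_converse:
  "lower_op E v \<alpha> = (\<lambda>u w. raise_op (E\<inverse>) v (\<lambda>u w. \<alpha> w u) w u)"
  unfolding lower_op_def raise_op_def rho_L_eq_rho_R_converse balance_op_def
  by (auto simp: shift_def alpha_in_def alpha_out_def fun_eq_iff field_simps)

lemma run_lower_op_eq_run_raise_op_converse:
  "run (lower_op E) \<sigma> \<alpha> k = (\<lambda>u v. run (raise_op (E\<inverse>)) \<sigma> (\<lambda>u v. \<alpha> v u) k v u)"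
  by (induction k) (simp_all add: lower_op_eq_raise_op_converse)

lemma strongly_connected_converse: "strongly_connected n E \<Longrightarrow> strongly_connected n (E\<inverse>)"
  unfolding strongly_connected_def by (auto simp: rtrancl_converse)

theorem theorem2:
  fixes n :: nat and E :: "(nat \<times> nat) set" and \<alpha> :: "nat \<Rightarrow> nat \<Rightarrow> real"
  assumes "strongly_connected n E"
  shows "(\<exists>\<alpha>R. raising_balanced n E \<alpha>R \<and>
            (\<forall>\<sigma>. fair n \<sigma> \<longrightarrow>
               (\<forall>(u, v)\<in>E. (\<lambda>k. run (raise_op E) \<sigma> \<alpha> k u v) \<longlonglongrightarrow> \<alpha>R u v)))
       \<and> (\<exists>\<alpha>L. lowering_balanced n E \<alpha>L \<and>
            (\<forall>\<sigma>. fair n \<sigma> \<longrightarrow>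
               (\<forall>(u, v)\<in>E. (\<lambda>k. run (lower_op E) \<sigma> \<alpha> k u v) \<longlonglongrightarrow> \<alpha>L u v)))"
proof -
  have converse: "strongly_connected n (E\<inverse>)"
    using assms by (rule strongly_connected_converse)
  obtain \<alpha>R where "raising_balanced n E \<alpha>R"
    and "\<And>\<sigma> u v. fair n \<sigma> \<Longrightarrow> (\<lambda>k. run (raise_op E) \<sigma> \<alpha> k u v) \<longlonglongrightarrow> \<alpha>R u v"
    using fair_raising_runs_converge[OF strongly_connected_finite balancing_potentials_nonempty, OF assms assms]
    by blast
  moreover obtain \<beta> where "raising_balanced n (E\<inverse>) \<beta>"
    and "\<And>\<sigma> u v. fair n \<sigma> \<Longrightarrow> (\<lambda>k. run (raise_op (E\<inverse>)) \<sigma> (\<lambda>u v. \<alpha> v u) k u v) \<longlonglongrightarrow> \<beta> u v"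
    using fair_raising_runs_converge[OF strongly_connected_finite balancing_potentials_nonempty,
        OF converse converse]
    by blast
  then have "lowering_balanced n E (\<lambda>u v. \<beta> v u)"
    and "\<And>\<sigma> u v. fair n \<sigma> \<Longrightarrow> (\<lambda>k. run (lower_op E) \<sigma> \<alpha> k u v) \<longlonglongrightarrow> \<beta> v u"
    by (simp_all add: lowering_balanced_def raising_balanced_def rho_L_eq_rho_R_converse
        run_lower_op_eq_run_raise_op_converse)
  ultimately show ?thesis
    by blast
qed

end
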